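(* Let $M=\mathbb{R}^2/\mathbb{Z}^2$ with its standard flat distance $d$, and for $n\geq1$ equip $M^n$ with the distance $\ell^\infty(x,y)=\max_{0\leq i\leq n-1}d(x_i,y_i)$. Then for every $0<\varepsilon<1/2$, $\mathrm{widim}_\varepsilon(M^n,\ell^\infty)=2n$.
   Context: The order of an open cover is the largest $m\geq0$ such that some $m+1$ distinct members have nonempty intersection; $\mathrm{widim}_\varepsilon(Y,\rho)$ is the minimum order of an open cover of the compact metric space $Y$ all of whose members have $\rho$-diameter $\leq\varepsilon$. *)

theory Defs
  imports "HOL-Analysis.Analysis" "HOL-Library.Extended_Nat"
begin

definition cover_order :: "'a set set \<Rightarrow> enat" where
  "cover_order U = Sup {enat m | m. \<exists>F. F \<subseteq> U \<and> card F = Suc m \<and> \<Inter>F \<noteq> {}}"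

definition widim :: "real \<Rightarrow> 'a set \<Rightarrow> ('a \<Rightarrow> 'a \<Rightarrow> real) \<Rightarrow> enat" where
  "widim \<epsilon> Y \<rho> = (INF U \<in> {U. (\<forall>V\<in>U. openin (Metric_space.mtopology Y \<rho>) V)
                              \<and> \<Union>U = Y
                              \<and> (\<forall>V\<in>U. \<forall>x\<in>V. \<forall>y\<in>V. \<rho> x y \<le> \<epsilon>)}. cover_order U)"

text \<open>The 2-torus R^2/Z^2, represented by the fundamental domain [0,1)^2,
  with the standard flat (quotient) distance.\<close>
definition torus :: "(real \<times> real) set" where
  "torus = {0..<1} \<times> {0..<1}"

definition torus_dist :: "real \<times> real \<Rightarrow> real \<times> real \<Rightarrow> real" where
  "torus_dist p q = (INF k \<in> {(real_of_int a, real_of_int b) | a b. True}. dist p (q + k))"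

definition torus_pow :: "nat \<Rightarrow> (nat \<Rightarrow> real \<times> real) set" where
  "torus_pow n = PiE {..<n} (\<lambda>_. torus)"

definition linf_dist :: "nat \<Rightarrow> (nat \<Rightarrow> real \<times> real) \<Rightarrow> (nat \<Rightarrow> real \<times> real) \<Rightarrow> real" where
  "linf_dist n x y = Max ((\<lambda>i. torus_dist (x i) (y i)) ` {..<n})"

end

theory Submission
  imports Defs
begin

text \<open>Identify \<open>M\<^sup>n\<close> with the torus \<open>\<real>\<^bsup>2n\<^esup>/\<int>\<^bsup>2n\<^esup>\<close>.

  Upper bound: for \<open>j = 0..2n\<close> shift the grid of mesh \<open>1/m\<close>, where \<open>2/m \<le> \<epsilon>\<close>, by
  \<open>j/(2n+1)\<close> in every coordinate and cut a margin of relative width \<open>1/(2(2n+1))\<close> off the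
  lower side of its open cubes. The cubes
  of one layer are disjoint, so the \<open>2n+1\<close> layers form a cover of order at most \<open>2n\<close>; it covers
  because in each of the \<open>2n\<close> coordinates a point lies in the margin of at most one shift, so some
  shift misses all margins.

  Lower bound: take a Lebesgue number \<open>\<delta>\<close> of an \<open>\<epsilon>\<close>-small open cover and a grid of mesh
  \<open>1/p\<close> with \<open>2/p < \<delta>\<close> and \<open>1/p < 1 - 2\<epsilon>\<close>. Assign to each grid point a cover member
  containing its \<open>\<delta>\<close>-ball, and label each coordinate of the grid point by rounding the real
  number nearest to it that is congruent modulo 1 to the coordinate of a fixed point of that member.
  As \<open>\<epsilon> < 1/2\<close> these labels satisfy the boundary conditions of Kuhn's combinatorial lemma on
  \<open>[0,1]\<^bsup>2n\<^esup>\<close>, which yields \<open>2n+1\<close> adjacent grid points with distinct labels. Adjacent grid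
  points with the same member get the same label, so their \<open>2n+1\<close> members are distinct, and all of
  them contain one of these grid points.\<close>

section \<open>Distance to the nearest integer\<close>

definition int_dist :: "real \<Rightarrow> real" where
  "int_dist x = \<bar>x - of_int (round x)\<bar>"

lemma int_dist_le: "int_dist x \<le> \<bar>x - of_int a\<bar>"
  unfolding int_dist_def by (rule round_diff_minimal)

lemma int_dist_add_int: "int_dist (x + of_int k) = int_dist x"
proof -
  have "round (x + of_int k) = round x + k"
    unfolding round_def by (metis add.commute add.left_commute floor_add_int)
  then show ?thesis
    unfolding int_dist_def by simp
qed

definition nearest_lift :: "real \<Rightarrow> real \<Rightarrow> real" where
  "nearest_lift a t = a + of_int (round (t - a))"

lemma nearest_lift_dist: "\<bar>nearest_lift a t - t\<bar> = int_dist (t - a)"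
  unfolding nearest_lift_def int_dist_def by simp

lemma nearest_lift_eq:
  assumes "\<bar>nearest_lift a t - t\<bar> \<le> \<epsilon>" and "\<bar>nearest_lift a t' - t'\<bar> \<le> \<epsilon>"
    and "\<bar>t - t'\<bar> < 1 - 2 * \<epsilon>"
  shows "nearest_lift a t = nearest_lift a t'"
proof -
  define k where "k = round (t - a) - round (t' - a)"
  have "nearest_lift a t - nearest_lift a t' = of_int k"
    unfolding nearest_lift_def k_def by simp
  moreover have "\<bar>nearest_lift a t - nearest_lift a t'\<bar> < 1"
    using assms by linarith
  ultimately have "\<bar>k\<bar> < 1"
    by (metis of_int_abs of_int_less_1_iff)
  then show ?thesis
    using \<open>nearest_lift a t - nearest_lift a t' = of_int k\<close> by simp
qed

section \<open>The flat distance on the torus and on its powers\<close>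

lemma torus_dist_le_lattice: "torus_dist p q \<le> dist p (q + (of_int a, of_int b))"
  unfolding torus_dist_def by (rule cINF_lower) (auto intro: bdd_belowI[where m = 0])

lemma torus_dist_geI:
  assumes "\<And>a b. c \<le> dist p (q + (of_int a, of_int b))"
  shows "c \<le> torus_dist p q"
  unfolding torus_dist_def by (rule cINF_greatest) (use assms in auto)

lemma torus_dist_nonneg: "0 \<le> torus_dist p q"
  by (rule torus_dist_geI) simp

lemma torus_dist_le_abs:
  "torus_dist p q \<le> \<bar>fst p - fst q - of_int a\<bar> + \<bar>snd p - snd q - of_int b\<bar>"
proof -
  have "torus_dist p q \<le> dist p (q + (of_int a, of_int b))"
    by (rule torus_dist_le_lattice)
  also have "\<dots> \<le> \<bar>fst p - fst q - of_int a\<bar> + \<bar>snd p - snd q - of_int b\<bar>"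
    by (cases p, cases q)
      (simp add: dist_Pair_Pair dist_real_def sqrt_sum_squares_le_sum_abs algebra_simps)
  finally show ?thesis .
qed

lemma int_dist_fst_le_torus_dist: "int_dist (fst p - fst q) \<le> torus_dist p q"
proof (rule torus_dist_geI)
  fix a b :: int
  have "int_dist (fst p - fst q) \<le> \<bar>fst p - fst q - of_int a\<bar>"
    by (rule int_dist_le)
  also have "\<dots> \<le> dist p (q + (of_int a, of_int b))"
    by (cases p, cases q) (simp add: dist_Pair_Pair dist_real_def real_le_rsqrt algebra_simps)
  finally show "int_dist (fst p - fst q) \<le> dist p (q + (of_int a, of_int b))" .
qed

lemma int_dist_snd_le_torus_dist: "int_dist (snd p - snd q) \<le> torus_dist p q"
proof (rule torus_dist_geI)
  fix a b :: int
  have "int_dist (snd p - snd q) \<le> \<bar>snd p - snd q - of_int b\<bar>"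
    by (rule int_dist_le)
  also have "\<dots> \<le> dist p (q + (of_int a, of_int b))"
    by (cases p, cases q) (simp add: dist_Pair_Pair dist_real_def real_le_rsqrt algebra_simps)
  finally show "int_dist (snd p - snd q) \<le> dist p (q + (of_int a, of_int b))" .
qed

lemma torus_dist_commute: "torus_dist p q = torus_dist q p"
proof -
  have "torus_dist p q \<le> torus_dist q p" for p q
  proof (rule torus_dist_geI)
    fix a b :: int
    have "torus_dist p q \<le> dist p (q + (of_int (- a), of_int (- b)))"
      by (rule torus_dist_le_lattice)
    also have "\<dots> = dist q (p + (of_int a, of_int b))"
      by (cases p, cases q) (simp add: dist_Pair_Pair dist_real_def algebra_simps power2_commute)
    finally show "torus_dist p q \<le> dist q (p + (of_int a, of_int b))" .
  qed
  then show ?thesis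
    by (simp add: eq_iff)
qed

lemma torus_dist_triangle: "torus_dist p r \<le> torus_dist p q + torus_dist q r"
proof -
  have "torus_dist p r - dist q (r + (of_int a2, of_int b2)) \<le> torus_dist p q" for a2 b2
  proof (rule torus_dist_geI)
    fix a1 b1 :: int
    let ?q = "q + (of_int a1, of_int b1)"
    have "torus_dist p r \<le> dist p (r + (of_int (a1 + a2), of_int (b1 + b2)))"
      by (rule torus_dist_le_lattice)
    also have "\<dots> \<le> dist p ?q + dist ?q (r + (of_int (a1 + a2), of_int (b1 + b2)))"
      by (rule dist_triangle)
    also have "dist ?q (r + (of_int (a1 + a2), of_int (b1 + b2))) = dist q (r + (of_int a2, of_int b2))"
      by (cases q, cases r) (simp add: dist_Pair_Pair dist_real_def algebra_simps)
    finally show "torus_dist p r - dist q (r + (of_int a2, of_int b2)) \<le> dist p ?q"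
      by simp
  qed
  then have "torus_dist p r - torus_dist p q \<le> dist q (r + (of_int a2, of_int b2))" for a2 b2
    by (smt (verit))
  then have "torus_dist p r - torus_dist p q \<le> torus_dist q r"
    by (rule torus_dist_geI)
  then show ?thesis
    by simp
qed

lemma torus_dist_self: "torus_dist p p = 0"
  using torus_dist_le_lattice[of p p 0 0] torus_dist_nonneg[of p p]
  by (simp add: zero_prod_def[symmetric])

lemma torus_dist_eq_0:
  assumes "p \<in> torus" and "q \<in> torus" and "torus_dist p q = 0"
  shows "p = q"
proof -
  have "x = y" if "int_dist (x - y) = 0" "x \<in> {0..<1}" "y \<in> {0..<1}" for x y :: real
  proof -
    have "x - y = of_int (round (x - y))"
      using that(1) unfolding int_dist_def by simp
    moreover have "\<bar>x - y\<bar> < 1"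
      using that(2,3) by auto
    ultimately have "\<bar>round (x - y)\<bar> < 1"
      by (metis of_int_abs of_int_less_1_iff)
    then show "x = y"
      using \<open>x - y = of_int (round (x - y))\<close> by simp
  qed
  moreover have "int_dist (fst p - fst q) = 0" "int_dist (snd p - snd q) = 0"
    using int_dist_fst_le_torus_dist[of p q] int_dist_snd_le_torus_dist[of p q] assms(3)
    by (auto simp: int_dist_def)
  ultimately show ?thesis
    using assms(1,2) unfolding torus_def by (cases p, cases q) auto
qed

lemma linf_dist_ge: "i < n \<Longrightarrow> torus_dist (x i) (y i) \<le> linf_dist n x y"
  unfolding linf_dist_def by (rule Max_ge) auto

lemma linf_dist_le_iff:
  "n \<ge> 1 \<Longrightarrow> linf_dist n x y \<le> c \<longleftrightarrow> (\<forall>i<n. torus_dist (x i) (y i) \<le> c)"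
  unfolding linf_dist_def by (subst Max_le_iff) (auto simp: lessThan_empty_iff)

lemma linf_dist_less_iff:
  "n \<ge> 1 \<Longrightarrow> linf_dist n x y < c \<longleftrightarrow> (\<forall>i<n. torus_dist (x i) (y i) < c)"
  unfolding linf_dist_def by (subst Max_less_iff) (auto simp: lessThan_empty_iff)

lemma Metric_space_linf_dist:
  assumes n: "n \<ge> 1"
  shows "Metric_space (torus_pow n) (linf_dist n)"
proof
  fix x y
  show "0 \<le> linf_dist n x y"
    using linf_dist_ge[of 0 n x y] torus_dist_nonneg[of "x 0" "y 0"] n by simp
  show "linf_dist n x y = linf_dist n y x"
    unfolding linf_dist_def by (simp add: torus_dist_commute)
next
  fix x y assume xy: "x \<in> torus_pow n" "y \<in> torus_pow n"
  show "linf_dist n x y = 0 \<longleftrightarrow> x = y"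
  proof
    assume dist0: "linf_dist n x y = 0"
    have "x i = y i" for i
    proof (cases "i < n")
      case True
      then have "torus_dist (x i) (y i) = 0"
        using linf_dist_ge[OF True, of x y] dist0 torus_dist_nonneg[of "x i" "y i"] by simp
      then show ?thesis
        using torus_dist_eq_0[of "x i" "y i"] xy True unfolding torus_pow_def by auto
    next
      case False
      then show ?thesis
        using xy unfolding torus_pow_def by (auto simp: PiE_def extensional_def)
    qed
    then show "x = y" by auto
  next
    assume "x = y"
    then show "linf_dist n x y = 0"
      using linf_dist_le_iff[OF n, of x y 0] linf_dist_ge[of 0 n x y] torus_dist_nonneg n
      by (simp add: torus_dist_self)
  qed
next
  fix x y z
  show "linf_dist n x z \<le> linf_dist n x y + linf_dist n y z"
    unfolding linf_dist_le_iff[OF n]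
    using torus_dist_triangle linf_dist_ge[of _ n x y] linf_dist_ge[of _ n y z] add_mono order_trans
    by meson
qed

abbreviation torus_pow_topology :: "nat \<Rightarrow> (nat \<Rightarrow> real \<times> real) topology" where
  "torus_pow_topology n \<equiv> Metric_space.mtopology (torus_pow n) (linf_dist n)"

definition torus_proj :: "real \<times> real \<Rightarrow> real \<times> real" where
  "torus_proj p = (frac (fst p), frac (snd p))"

lemma torus_proj_in_torus: "torus_proj p \<in> torus"
  unfolding torus_proj_def torus_def by (simp add: frac_lt_1)

lemma torus_proj_id: "p \<in> torus \<Longrightarrow> torus_proj p = p"
  unfolding torus_proj_def torus_def by (cases p) (auto simp: frac_eq)

lemma torus_dist_torus_proj_le: "torus_dist (torus_proj p) (torus_proj q) \<le> dist p q"
proof -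
  let ?k = "(of_int (\<lfloor>fst q\<rfloor> - \<lfloor>fst p\<rfloor>), of_int (\<lfloor>snd q\<rfloor> - \<lfloor>snd p\<rfloor>))"
  have "torus_dist (torus_proj p) (torus_proj q) \<le> dist (torus_proj p) (torus_proj q + ?k)"
    by (rule torus_dist_le_lattice)
  also have "\<dots> = dist p q"
    by (cases p, cases q)
      (simp add: torus_proj_def frac_def dist_Pair_Pair dist_real_def algebra_simps)
  finally show ?thesis .
qed

definition torus_pow_proj :: "nat \<Rightarrow> (nat \<Rightarrow> real \<times> real) \<Rightarrow> (nat \<Rightarrow> real \<times> real)" where
  "torus_pow_proj n x = restrict (\<lambda>i. torus_proj (x i)) {..<n}"

lemma torus_pow_proj_in: "torus_pow_proj n x \<in> torus_pow n"
  unfolding torus_pow_proj_def torus_pow_def by (simp add: torus_proj_in_torus)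

lemma torus_pow_proj_id: "x \<in> torus_pow n \<Longrightarrow> torus_pow_proj n x = x"
  unfolding torus_pow_proj_def torus_pow_def
  by (auto simp: torus_proj_id PiE_iff extensional_def fun_eq_iff)

lemma continuous_map_torus_pow_proj:
  assumes n: "n \<ge> 1"
  shows "continuous_map (product_topology (\<lambda>_. (euclidean :: (real \<times> real) topology)) {..<n})
           (torus_pow_topology n) (torus_pow_proj n)"
proof -
  interpret Metric_space "torus_pow n" "linf_dist n"
    by (rule Metric_space_linf_dist[OF n])
  let ?X = "product_topology (\<lambda>_. (euclidean :: (real \<times> real) topology)) {..<n}"
  show ?thesis
    unfolding continuous_map_to_metric
  proof (intro ballI allI impI)
    fix x :: "nat \<Rightarrow> real \<times> real" and e :: real
    assume x: "x \<in> topspace (?X)" and e: "e > 0"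
    define B where "B = PiE {..<n} (\<lambda>i. ball (x i) e)"
    have "openin (?X) B"
      unfolding B_def openin_PiE_gen by auto
    moreover have "x \<in> B"
      using x e unfolding B_def by (auto simp: PiE_def)
    moreover have "torus_pow_proj n y \<in> mball (torus_pow_proj n x) e" if y: "y \<in> B" for y
    proof -
      have "torus_dist (torus_proj (x i)) (torus_proj (y i)) < e" if i: "i < n" for i
        using torus_dist_torus_proj_le[of "x i" "y i"] y i unfolding B_def by (force simp: PiE_iff)
      then have "linf_dist n (torus_pow_proj n x) (torus_pow_proj n y) < e"
        unfolding linf_dist_less_iff[OF n] torus_pow_proj_def by simp
      then show ?thesis
        by (simp add: torus_pow_proj_in)
    qed
    ultimately show "\<exists>U. openin (?X) U \<and> x \<in> U
        \<and> (\<forall>y\<in>U. torus_pow_proj n y \<in> mball (torus_pow_proj n x) e)"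
      by blast
  qed
qed

lemma compactin_torus_pow:
  assumes n: "n \<ge> 1"
  shows "compactin (torus_pow_topology n) (torus_pow n)"
proof -
  define S where "S = PiE {..<n} (\<lambda>_. cbox (0::real, 0::real) (1, 1))"
  have "compactin (product_topology (\<lambda>_. (euclidean :: (real \<times> real) topology)) {..<n}) S"
    unfolding S_def compactin_PiE by simp
  moreover have "torus_pow_proj n ` S = torus_pow n"
  proof
    show "torus_pow_proj n ` S \<subseteq> torus_pow n"
      using torus_pow_proj_in by blast
    have "torus \<subseteq> cbox (0::real, 0::real) (1, 1)"
      unfolding torus_def cbox_Pair_eq by auto
    then have "torus_pow n \<subseteq> S"
      unfolding S_def torus_pow_def by (auto simp: PiE_iff)
    then show "torus_pow n \<subseteq> torus_pow_proj n ` S"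
      using torus_pow_proj_id by (metis image_eqI subsetI subset_eq)
  qed
  ultimately show ?thesis
    using image_compactin[OF _ continuous_map_torus_pow_proj[OF n]] by metis
qed

definition coord :: "(nat \<Rightarrow> real \<times> real) \<Rightarrow> nat \<Rightarrow> real" where
  "coord x c = (if even c then fst (x (c div 2)) else snd (x (c div 2)))"

lemma int_dist_coord_le_linf_dist:
  assumes "c < 2 * n"
  shows "int_dist (coord x c - coord y c) \<le> linf_dist n x y"
proof -
  have "int_dist (coord x c - coord y c) \<le> torus_dist (x (c div 2)) (y (c div 2))"
    unfolding coord_def using int_dist_fst_le_torus_dist int_dist_snd_le_torus_dist by auto
  also have "\<dots> \<le> linf_dist n x y"
    by (rule linf_dist_ge) (use assms in auto)
  finally show ?thesis .
qed

lemma linf_dist_le_coordwise: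
  assumes n: "n \<ge> 1"
    and close: "\<And>c. c < 2 * n \<Longrightarrow> \<exists>a::int. \<bar>coord x c - coord y c - of_int a\<bar> \<le> r"
  shows "linf_dist n x y \<le> 2 * r"
  unfolding linf_dist_le_iff[OF n]
proof (intro allI impI)
  fix i assume i: "i < n"
  obtain a :: int where a: "\<bar>fst (x i) - fst (y i) - of_int a\<bar> \<le> r"
    using close[of "2 * i"] i by (auto simp: coord_def)
  obtain b :: int where b: "\<bar>snd (x i) - snd (y i) - of_int b\<bar> \<le> r"
    using close[of "2 * i + 1"] i by (auto simp: coord_def)
  show "torus_dist (x i) (y i) \<le> 2 * r"
    using torus_dist_le_abs[of "x i" "y i" a b] a b by linarith
qed

section \<open>Lower bound via Kuhn's combinatorial lemma\<close>

definition grid_point :: "nat \<Rightarrow> nat \<Rightarrow> (nat \<Rightarrow> nat) \<Rightarrow> (nat \<Rightarrow> real \<times> real)" where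
  "grid_point n p z =
     torus_pow_proj n (\<lambda>i. (real (z (2 * i)) / real p, real (z (2 * i + 1)) / real p))"

lemma grid_point_in: "grid_point n p z \<in> torus_pow n"
  unfolding grid_point_def by (rule torus_pow_proj_in)

lemma coord_grid_point: "c < 2 * n \<Longrightarrow> coord (grid_point n p z) c = frac (real (z c) / real p)"
  unfolding grid_point_def torus_pow_proj_def coord_def torus_proj_def
  by auto

lemma linf_dist_grid_point_le:
  assumes n: "n \<ge> 1" and p: "0 < p"
    and close: "\<And>c. \<bar>real (z c) - real (z' c)\<bar> \<le> 1"
  shows "linf_dist n (grid_point n p z) (grid_point n p z') \<le> 2 / real p"
proof -
  have "\<exists>a::int. \<bar>coord (grid_point n p z) c - coord (grid_point n p z') c - of_int a\<bar> \<le> 1 / real p"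
    if c: "c < 2 * n" for c
  proof
    let ?t = "real (z c) / real p" and ?t' = "real (z' c) / real p"
    have "coord (grid_point n p z) c - coord (grid_point n p z') c - of_int (\<lfloor>?t'\<rfloor> - \<lfloor>?t\<rfloor>)
        = ?t - ?t'"
      unfolding coord_grid_point[OF c] frac_def by simp
    also have "\<dots> = (real (z c) - real (z' c)) / real p"
      by (simp add: diff_divide_distrib)
    finally have "coord (grid_point n p z) c - coord (grid_point n p z') c - of_int (\<lfloor>?t'\<rfloor> - \<lfloor>?t\<rfloor>)
        = (real (z c) - real (z' c)) / real p" .
    moreover have "\<bar>real (z c) - real (z' c)\<bar> / real p \<le> 1 / real p"
      using close[of c] by (simp add: divide_right_mono)
    ultimately show "\<bar>coord (grid_point n p z) c - coord (grid_point n p z') c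
        - of_int (\<lfloor>?t'\<rfloor> - \<lfloor>?t\<rfloor>)\<bar> \<le> 1 / real p"
      by simp
  qed
  then show ?thesis
    using linf_dist_le_coordwise[OF n] by fastforce
qed

lemma kuhn_fully_labelled_cell:
  fixes lab :: "(nat \<Rightarrow> nat) \<Rightarrow> nat \<Rightarrow> nat"
  assumes p: "0 < p"
    and lab0: "\<And>x j. j < d \<Longrightarrow> x j = 0 \<Longrightarrow> lab x j = 0"
    and lab1: "\<And>x j. j < d \<Longrightarrow> x j = p \<Longrightarrow> lab x j = 1"
  shows "\<exists>w. (\<forall>j\<le>d. reduced d (lab (w j)) = j) \<and> (\<forall>i\<le>d. \<forall>j\<le>d. \<forall>c. \<bar>real (w i c) - real (w j c)\<bar> \<le> 1)"
proof -
  have "odd (card {s. ksimplex p d s \<and> (reduced d \<circ> lab) ` s = {..d}})"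
    by (rule kuhn_combinatorial[OF p]) (use lab0 lab1 in auto)
  then obtain s where "ksimplex p d s" and labels: "(reduced d \<circ> lab) ` s = {..d}"
    using odd_card_imp_not_empty by force
  then obtain base upd where simplex: "kuhn_simplex p d base upd s"
    by (auto elim: ksimplex.cases)
  have close: "\<bar>real (u c) - real (v c)\<bar> \<le> 1" if "u \<in> s" "v \<in> s" for u v c
    using kuhn_simplex.base_le[OF simplex that(1), of c] kuhn_simplex.le_Suc_base[OF simplex that(1), of c]
      kuhn_simplex.base_le[OF simplex that(2), of c] kuhn_simplex.le_Suc_base[OF simplex that(2), of c]
    by linarith
  have "\<forall>j\<in>{..d}. \<exists>u\<in>s. reduced d (lab u) = j"
    using labels by (metis comp_apply imageE)
  then obtain w where "\<And>j. j \<in> {..d} \<Longrightarrow> w j \<in> s \<and> reduced d (lab (w j)) = j"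
    by metis
  then show ?thesis
    using close by (intro exI[of _ w]) auto
qed

lemma torus_cover_labelling:
  fixes V :: "(nat \<Rightarrow> nat) \<Rightarrow> (nat \<Rightarrow> real \<times> real) set"
  assumes eps: "\<epsilon> < 1/2" and p: "0 < p" "1 / real p < 1 - 2 * \<epsilon>"
    and grid_in: "\<And>z. grid_point n p z \<in> V z"
    and diam: "\<And>z. \<forall>x\<in>V z. \<forall>y\<in>V z. linf_dist n x y \<le> \<epsilon>"
  obtains lab :: "(nat \<Rightarrow> nat) \<Rightarrow> nat \<Rightarrow> nat"
  where "\<And>z j. j < 2 * n \<Longrightarrow> z j = 0 \<Longrightarrow> lab z j = 0"
    and "\<And>z j. j < 2 * n \<Longrightarrow> z j = p \<Longrightarrow> lab z j = 1"
    and "\<And>z z'. V z = V z' \<Longrightarrow> (\<And>c. \<bar>real (z c) - real (z' c)\<bar> \<le> 1) \<Longrightarrow> lab z = lab z'"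
proof -
  define anchor where "anchor z = (SOME a. a \<in> V z)" for z
  have anchor: "anchor z \<in> V z" for z
    unfolding anchor_def by (rule someI[of "\<lambda>a. a \<in> V z", OF grid_in])
  define lift where "lift z c = nearest_lift (coord (anchor z) c) (real (z c) / real p)" for z c
  have lift_close: "\<bar>lift z c - real (z c) / real p\<bar> \<le> \<epsilon>" if c: "c < 2 * n" for z c
  proof -
    let ?t = "real (z c) / real p" and ?a = "coord (anchor z) c"
    have "\<bar>lift z c - ?t\<bar> = int_dist ((frac ?t - ?a) + of_int \<lfloor>?t\<rfloor>)"
      unfolding lift_def nearest_lift_dist by (simp add: frac_def)
    also have "\<dots> = int_dist (coord (grid_point n p z) c - ?a)"
      by (simp add: int_dist_add_int coord_grid_point[OF c])
    also have "\<dots> \<le> linf_dist n (grid_point n p z) (anchor z)"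
      by (rule int_dist_coord_le_linf_dist[OF c])
    also have "\<dots> \<le> \<epsilon>"
      using diam grid_in anchor by blast
    finally show ?thesis .
  qed
  define lab where "lab z c = (if c < 2 * n \<and> 1/2 \<le> lift z c then 1 else 0 :: nat)" for z c
  show ?thesis
  proof (rule that)
    fix z :: "nat \<Rightarrow> nat" and j
    assume "j < 2 * n" "z j = 0"
    then show "lab z j = 0"
      using lift_close[of j z] eps unfolding lab_def by auto
  next
    fix z :: "nat \<Rightarrow> nat" and j
    assume "j < 2 * n" "z j = p"
    then show "lab z j = 1"
      using lift_close[of j z] eps p unfolding lab_def by auto
  next
    fix z z' assume same: "V z = V z'" and close: "\<And>c. \<bar>real (z c) - real (z' c)\<bar> \<le> 1"
    have "lift z c = lift z' c" if c: "c < 2 * n" for c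
    proof -
      have "\<bar>real (z c) / real p - real (z' c) / real p\<bar> \<le> 1 / real p"
        using close[of c] p by (simp add: diff_divide_distrib[symmetric] divide_right_mono)
      then have "\<bar>real (z c) / real p - real (z' c) / real p\<bar> < 1 - 2 * \<epsilon>"
        using p(2) by linarith
      moreover have "anchor z = anchor z'"
        unfolding anchor_def same ..
      ultimately show ?thesis
        using lift_close[OF c, of z] lift_close[OF c, of z'] nearest_lift_eq
        unfolding lift_def by metis
    qed
    then show "lab z = lab z'"
      unfolding lab_def fun_eq_iff by auto
  qed
qed

lemma cover_order_geI:
  assumes "F \<subseteq> U" and "card F = Suc m" and "\<Inter>F \<noteq> {}"
  shows "enat m \<le> cover_order U"
  unfolding cover_order_def by (rule Sup_upper) (use assms in blast)

lemma cover_order_ge_grid_assignment: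
  assumes n: "n \<ge> 1" and eps: "\<epsilon> < 1/2"
    and p: "0 < p" "2 / real p < \<delta>" "1 / real p < 1 - 2 * \<epsilon>"
    and V: "\<And>z. V z \<in> U"
    and near: "\<And>z z'. linf_dist n (grid_point n p z) (grid_point n p z') < \<delta> \<Longrightarrow> grid_point n p z' \<in> V z"
    and diam: "\<And>V x y. V \<in> U \<Longrightarrow> x \<in> V \<Longrightarrow> y \<in> V \<Longrightarrow> linf_dist n x y \<le> \<epsilon>"
  shows "enat (2 * n) \<le> cover_order U"
proof -
  have close_grid: "linf_dist n (grid_point n p z) (grid_point n p z') < \<delta>"
    if "\<And>c. \<bar>real (z c) - real (z' c)\<bar> \<le> 1" for z z'
    using linf_dist_grid_point_le[OF n p(1), of z z'] that p(2) by simp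
  have grid_in: "grid_point n p z \<in> V z" for z
    using near close_grid by simp
  have small: "\<And>z. \<forall>x\<in>V z. \<forall>y\<in>V z. linf_dist n x y \<le> \<epsilon>"
    using diam V by blast
  obtain lab :: "(nat \<Rightarrow> nat) \<Rightarrow> nat \<Rightarrow> nat" where lab0: "\<And>z j. j < 2 * n \<Longrightarrow> z j = 0 \<Longrightarrow> lab z j = 0"
    and lab1: "\<And>z j. j < 2 * n \<Longrightarrow> z j = p \<Longrightarrow> lab z j = 1"
    and lab_eq: "\<And>z z'. V z = V z' \<Longrightarrow> (\<And>c. \<bar>real (z c) - real (z' c)\<bar> \<le> 1) \<Longrightarrow> lab z = lab z'"
    by (elim torus_cover_labelling[OF eps p(1,3) grid_in small])
  have "\<exists>w. (\<forall>j\<le>2 * n. reduced (2 * n) (lab (w j)) = j)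
      \<and> (\<forall>i\<le>2 * n. \<forall>j\<le>2 * n. \<forall>c. \<bar>real (w i c) - real (w j c)\<bar> \<le> 1)"
    by (rule kuhn_fully_labelled_cell) (use p(1) lab0 lab1 in auto)
  then obtain w where w_lab: "\<forall>j\<le>2 * n. reduced (2 * n) (lab (w j)) = j"
    and w_close: "\<forall>i\<le>2 * n. \<forall>j\<le>2 * n. \<forall>c. \<bar>real (w i c) - real (w j c)\<bar> \<le> 1"
    by blast
  define F where "F = (\<lambda>j. V (w j)) ` {..2 * n}"
  have "inj_on (\<lambda>j. V (w j)) {..2 * n}"
  proof (rule inj_onI)
    fix i j assume "i \<in> {..2 * n}" "j \<in> {..2 * n}" "V (w i) = V (w j)"
    then have "lab (w i) = lab (w j)"
      using lab_eq[of "w i" "w j"] w_close by simp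
    then show "i = j"
      using w_lab \<open>i \<in> {..2 * n}\<close> \<open>j \<in> {..2 * n}\<close> by (metis atMost_iff)
  qed
  then have "card F = Suc (2 * n)"
    unfolding F_def by (simp add: card_image)
  moreover have "grid_point n p (w 0) \<in> \<Inter>F"
    unfolding F_def using near close_grid w_close by auto
  moreover have "F \<subseteq> U"
    unfolding F_def using V by blast
  ultimately show ?thesis
    by (intro cover_order_geI[of F]) auto
qed

lemma torus_pow_cover_order_ge:
  assumes n: "n \<ge> 1" and eps: "\<epsilon> < 1/2"
    and opn: "\<And>V. V \<in> U \<Longrightarrow> openin (torus_pow_topology n) V"
    and cover: "torus_pow n \<subseteq> \<Union>U"
    and diam: "\<And>V x y. V \<in> U \<Longrightarrow> x \<in> V \<Longrightarrow> y \<in> V \<Longrightarrow> linf_dist n x y \<le> \<epsilon>"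
  shows "enat (2 * n) \<le> cover_order U"
proof -
  interpret Metric_space "torus_pow n" "linf_dist n"
    by (rule Metric_space_linf_dist[OF n])
  obtain \<delta> where "\<delta> > 0" and lebesgue: "\<forall>x \<in> torus_pow n. \<exists>V \<in> U. mball x \<delta> \<subseteq> V"
    using lebesgue_number[OF compactin_torus_pow[OF n] cover opn] by blast
  obtain p :: nat where p_big: "max (2 / \<delta>) (1 / (1 - 2 * \<epsilon>)) < p"
    using reals_Archimedean2 by blast
  have "0 < 2 / \<delta>"
    using \<open>\<delta> > 0\<close> by simp
  then have "0 < real p"
    using p_big by linarith
  then have p: "0 < p" "2 / real p < \<delta>" "1 / real p < 1 - 2 * \<epsilon>"
    using p_big \<open>\<delta> > 0\<close> eps by (auto simp: field_simps)
  have "\<forall>z. \<exists>V. V \<in> U \<and> mball (grid_point n p z) \<delta> \<subseteq> V"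
    using lebesgue grid_point_in by blast
  from choice[OF this] obtain V where V: "\<And>z. V z \<in> U \<and> mball (grid_point n p z) \<delta> \<subseteq> V z"
    by blast
  show ?thesis
  proof (rule cover_order_ge_grid_assignment[OF n eps p _ _ diam])
    show "V z \<in> U" for z
      using V by blast
    show "grid_point n p z' \<in> V z" if "linf_dist n (grid_point n p z) (grid_point n p z') < \<delta>" for z z'
      using V[of z] that grid_point_in by auto
  qed
qed

section \<open>Upper bound: shifted layers of grid cells\<close>

definition grid_cell :: "nat \<Rightarrow> real \<Rightarrow> real \<Rightarrow> int \<Rightarrow> real set" where
  "grid_cell m h s k = {t. \<lfloor>real m * t - s\<rfloor> mod int m = k \<and> h < frac (real m * t - s)}"

lemma open_grid_cell:
  assumes "0 \<le> h"
  shows "open (grid_cell m h s k)"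
proof -
  let ?I = "\<lambda>q. {t. of_int q + h < real m * t - s \<and> real m * t - s < of_int q + 1}"
  have "grid_cell m h s k = (\<Union>q\<in>{q. q mod int m = k}. ?I q)"
  proof (intro equalityI subsetI)
    fix t assume "t \<in> grid_cell m h s k"
    then show "t \<in> (\<Union>q\<in>{q. q mod int m = k}. ?I q)"
      unfolding grid_cell_def frac_def by (auto intro!: bexI[of _ "\<lfloor>real m * t - s\<rfloor>"])
  next
    fix t assume "t \<in> (\<Union>q\<in>{q. q mod int m = k}. ?I q)"
    then obtain q where "q mod int m = k" "t \<in> ?I q"
      by blast
    moreover from this assms have "\<lfloor>real m * t - s\<rfloor> = q"
      by (simp add: floor_eq_iff)
    ultimately show "t \<in> grid_cell m h s k"
      unfolding grid_cell_def frac_def by simp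
  qed
  moreover have "open (?I q)" for q
    by (intro open_Collect_conj open_Collect_less continuous_intros)
  ultimately show ?thesis
    by (simp add: open_UN)
qed

lemma grid_cell_add_int:
  assumes "t \<in> grid_cell m h s k"
  shows "t + of_int a \<in> grid_cell m h s k"
proof -
  have eq: "real m * (t + of_int a) - s = (real m * t - s) + of_int (int m * a)"
    by (simp add: algebra_simps)
  have "\<lfloor>real m * (t + of_int a) - s\<rfloor> = \<lfloor>real m * t - s\<rfloor> + int m * a"
    unfolding eq by (rule floor_add_int[symmetric])
  moreover have "frac (real m * (t + of_int a) - s) = frac (real m * t - s)"
    unfolding eq by (rule frac_add_of_int_right)
  ultimately show ?thesis
    using assms unfolding grid_cell_def by simp
qed

lemma grid_cell_close:
  assumes m: "m \<ge> 1" and "t \<in> grid_cell m h s k" and "t' \<in> grid_cell m h s k"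
  shows "\<exists>a::int. \<bar>t - t' - of_int a\<bar> \<le> 1 / real m"
proof -
  define y where "y = real m * t - s"
  define y' where "y' = real m * t' - s"
  have "\<lfloor>y\<rfloor> mod int m = \<lfloor>y'\<rfloor> mod int m"
    using assms(2,3) unfolding grid_cell_def y_def y'_def by auto
  then have "int m dvd \<lfloor>y\<rfloor> - \<lfloor>y'\<rfloor>"
    by (simp add: mod_eq_dvd_iff)
  then obtain a where a: "\<lfloor>y\<rfloor> - \<lfloor>y'\<rfloor> = int m * a"
    by (elim dvdE)
  have "real m * (t - t' - of_int a) = (y - y') - real_of_int (\<lfloor>y\<rfloor> - \<lfloor>y'\<rfloor>)"
    unfolding a by (simp add: y_def y'_def algebra_simps)
  also have "\<dots> = frac y - frac y'"
    by (simp add: frac_def)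
  finally have "real m * (t - t' - of_int a) = frac y - frac y'" .
  moreover have "\<bar>frac y - frac y'\<bar> < 1"
    using frac_lt_1[of y] frac_lt_1[of y'] frac_ge_0[of y] frac_ge_0[of y'] by linarith
  ultimately have "real m * \<bar>t - t' - of_int a\<bar> \<le> 1"
    by (simp add: abs_mult)
  then show ?thesis
    using m by (auto simp: field_simps)
qed

lemma openin_coord_periodic:
  assumes n: "n \<ge> 1" and c: "c < 2 * n" and "open S"
    and periodic: "\<And>t a. t \<in> S \<Longrightarrow> t + of_int a \<in> S"
  shows "openin (torus_pow_topology n) {x \<in> torus_pow n. coord x c \<in> S}"
proof -
  interpret Metric_space "torus_pow n" "linf_dist n"
    by (rule Metric_space_linf_dist[OF n])
  show ?thesis
    unfolding openin_mtopology
  proof (intro conjI allI impI)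
    fix x assume x: "x \<in> {x \<in> torus_pow n. coord x c \<in> S}"
    then obtain r where "r > 0" and r: "ball (coord x c) r \<subseteq> S"
      using \<open>open S\<close> open_contains_ball by blast
    have "mball x r \<subseteq> {x \<in> torus_pow n. coord x c \<in> S}"
    proof
      fix z assume z: "z \<in> mball x r"
      define a where "a = round (coord z c - coord x c)"
      have "int_dist (coord z c - coord x c) \<le> linf_dist n x z"
        using int_dist_coord_le_linf_dist[OF c, of z x] commute[of z x] by simp
      then have "int_dist (coord z c - coord x c) < r"
        using z by simp
      then have "coord z c - of_int a \<in> ball (coord x c) r"
        unfolding a_def int_dist_def mem_ball dist_real_def by arith
      then have "coord z c - of_int a + of_int a \<in> S"
        using r periodic by blast
      then show "z \<in> {x \<in> torus_pow n. coord x c \<in> S}"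
        using z by simp
    qed
    then show "\<exists>r>0. mball x r \<subseteq> {x \<in> torus_pow n. coord x c \<in> S}"
      using \<open>r > 0\<close> by blast
  qed auto
qed

text \<open>Cells are indexed by residues modulo \<open>m\<close>, so a cell crossing the boundary of the
  fundamental domain \<open>[0,1)\<close> is a single cell of the torus.\<close>

definition torus_cell :: "nat \<Rightarrow> nat \<Rightarrow> nat \<Rightarrow> (nat \<Rightarrow> int) \<Rightarrow> (nat \<Rightarrow> real \<times> real) set" where
  "torus_cell n m j k = {x \<in> torus_pow n. \<forall>c<2 * n.
     coord x c \<in> grid_cell m (1 / (2 * real (Suc (2 * n)))) (real j / real (Suc (2 * n))) (k c)}"

lemma openin_torus_cell:
  assumes n: "n \<ge> 1"
  shows "openin (torus_pow_topology n) (torus_cell n m j k)"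
proof -
  let ?S = "\<lambda>c. grid_cell m (1 / (2 * real (Suc (2 * n)))) (real j / real (Suc (2 * n))) (k c)"
  have "0 \<in> {..<2 * n}"
    using n by simp
  then have eq: "torus_cell n m j k = (\<Inter>c\<in>{..<2 * n}. {x \<in> torus_pow n. coord x c \<in> ?S c})"
    unfolding torus_cell_def lessThan_iff by blast
  have "openin (torus_pow_topology n) {x \<in> torus_pow n. coord x c \<in> ?S c}"
    if "c \<in> {..<2 * n}" for c
    using that by (intro openin_coord_periodic[OF n] open_grid_cell grid_cell_add_int) auto
  then show ?thesis
    unfolding eq using n by (intro openin_INT2) (auto simp: lessThan_empty_iff)
qed

lemma torus_cell_linf_dist_le:
  assumes n: "n \<ge> 1" and m: "m \<ge> 1"
    and "x \<in> torus_cell n m j k" and "y \<in> torus_cell n m j k"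
  shows "linf_dist n x y \<le> 2 / real m"
proof -
  have "\<exists>a::int. \<bar>coord x c - coord y c - of_int a\<bar> \<le> 1 / real m" if "c < 2 * n" for c
    using assms(3,4) that unfolding torus_cell_def by (blast intro: grid_cell_close[OF m])
  then have "linf_dist n x y \<le> 2 * (1 / real m)"
    by (rule linf_dist_le_coordwise[OF n])
  then show ?thesis
    by simp
qed

lemma torus_cells_disjoint:
  assumes "torus_cell n m j k \<inter> torus_cell n m j k' \<noteq> {}"
  shows "torus_cell n m j k = torus_cell n m j k'"
proof -
  have "k c = k' c" if "c < 2 * n" for c
    using assms that unfolding torus_cell_def grid_cell_def by auto
  then show ?thesis
    unfolding torus_cell_def grid_cell_def by auto
qed

lemma frac_near_shift_unique:
  fixes y :: real
  assumes "i \<le> d" and "j \<le> d"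
    and "frac (y - real i / real (Suc d)) \<le> 1 / (2 * real (Suc d))"
    and "frac (y - real j / real (Suc d)) \<le> 1 / (2 * real (Suc d))"
  shows "i = j"
proof -
  have False if ij: "i < j" "j \<le> d"
    and near: "frac (y - real i / real (Suc d)) \<le> 1 / (2 * real (Suc d))"
      "frac (y - real j / real (Suc d)) \<le> 1 / (2 * real (Suc d))" for i j
  proof -
    define h where "h = 1 / (2 * real (Suc d))"
    define N where "N = \<lfloor>y - real i / real (Suc d)\<rfloor> - \<lfloor>y - real j / real (Suc d)\<rfloor>"
    have diff: "real (j - i) / real (Suc d)
        = frac (y - real i / real (Suc d)) - frac (y - real j / real (Suc d)) + of_int N"
      unfolding N_def frac_def using ij by (simp add: diff_divide_distrib)
    have "1 / real (Suc d) \<le> real (j - i) / real (Suc d)" "real (j - i) / real (Suc d) \<le> real d / real (Suc d)"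
      using ij by (simp_all add: divide_right_mono)
    moreover have "1 / real (Suc d) = 2 * h" "real d / real (Suc d) = 1 - 2 * h" "0 < h"
      unfolding h_def by (simp_all add: field_simps)
    ultimately have "0 < real_of_int N" "real_of_int N < 1"
      using diff near[folded h_def] frac_ge_0[of "y - real i / real (Suc d)"]
        frac_ge_0[of "y - real j / real (Suc d)"] by linarith+
    then show False
      by simp
  qed
  then show ?thesis
    using assms by (metis linorder_neqE_nat)
qed

lemma exists_shift_outside_margins:
  fixes y :: "nat \<Rightarrow> real"
  shows "\<exists>j\<le>d. \<forall>c<d. 1 / (2 * real (Suc d)) < frac (y c - real j / real (Suc d))"
proof (rule ccontr)
  define B where "B c = {j. j \<le> d \<and> frac (y c - real j / real (Suc d)) \<le> 1 / (2 * real (Suc d))}" for c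
  assume "\<not> ?thesis"
  then have "{..d} \<subseteq> (\<Union>c<d. B c)"
    unfolding B_def by (auto simp: not_less)
  then have "card {..d} \<le> card (\<Union>c<d. B c)"
    by (rule card_mono[rotated]) (simp add: B_def)
  also have "\<dots> \<le> (\<Sum>c<d. card (B c))"
    by (rule card_UN_le) simp
  also have "\<dots> \<le> (\<Sum>c<d. 1)"
    by (intro sum_mono) (auto simp: B_def card_le_Suc0_iff_eq intro: frac_near_shift_unique)
  finally show False
    by simp
qed

lemma torus_cells_cover:
  assumes "x \<in> torus_pow n"
  shows "\<exists>j\<le>2 * n. \<exists>k. x \<in> torus_cell n m j k"
proof -
  obtain j where "j \<le> 2 * n" and j: "\<forall>c<2 * n. 1 / (2 * real (Suc (2 * n)))
      < frac (real m * coord x c - real j / real (Suc (2 * n)))"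
    using exists_shift_outside_margins[where d = "2 * n" and y = "\<lambda>c. real m * coord x c"] by blast
  define k where "k c = \<lfloor>real m * coord x c - real j / real (Suc (2 * n))\<rfloor> mod int m" for c
  have "x \<in> torus_cell n m j k"
    unfolding torus_cell_def grid_cell_def k_def using assms j by auto
  then show ?thesis
    using \<open>j \<le> 2 * n\<close> by blast
qed

lemma cover_order_le_layers:
  assumes disjoint: "\<And>j k k'. W j k \<inter> W j k' \<noteq> {} \<Longrightarrow> W j k = W j k'"
  shows "cover_order {W j k | j k. j \<le> m} \<le> enat m"
  unfolding cover_order_def
proof (rule Sup_least)
  fix e assume "e \<in> {enat m' | m'. \<exists>F. F \<subseteq> {W j k | j k. j \<le> m} \<and> card F = Suc m' \<and> \<Inter>F \<noteq> {}}"
  then obtain m' F x where e: "e = enat m'" and F: "F \<subseteq> {W j k | j k. j \<le> m}"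
    and card: "card F = Suc m'" and x: "x \<in> \<Inter>F"
    by blast
  have "\<forall>V\<in>F. \<exists>j. j \<le> m \<and> (\<exists>k. V = W j k)"
    using F by blast
  from bchoice[OF this] obtain J where J: "\<And>V. V \<in> F \<Longrightarrow> J V \<le> m \<and> (\<exists>k. V = W (J V) k)"
    by blast
  have "inj_on J F"
  proof (rule inj_onI)
    fix V V' assume "V \<in> F" "V' \<in> F" "J V = J V'"
    obtain k where "V = W (J V) k"
      using J[OF \<open>V \<in> F\<close>] by blast
    moreover obtain k' where "V' = W (J V) k'"
      using J[OF \<open>V' \<in> F\<close>] \<open>J V = J V'\<close> by auto
    moreover have "x \<in> V" "x \<in> V'"
      using x \<open>V \<in> F\<close> \<open>V' \<in> F\<close> by blast+
    ultimately show "V = V'"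
      using disjoint[of "J V" k k'] by blast
  qed
  then have "card F \<le> card {..m}"
    by (rule card_inj_on_le) (use J in auto)
  then show "e \<le> enat m"
    using e card by simp
qed

lemma torus_pow_cover_order_le:
  assumes n: "n \<ge> 1" and "0 < \<epsilon>"
  shows "\<exists>W. (\<forall>V\<in>W. openin (torus_pow_topology n) V) \<and> \<Union>W = torus_pow n
    \<and> (\<forall>V\<in>W. \<forall>x\<in>V. \<forall>y\<in>V. linf_dist n x y \<le> \<epsilon>) \<and> cover_order W \<le> enat (2 * n)"
proof -
  obtain m :: nat where m_big: "2 / \<epsilon> < real m"
    using reals_Archimedean2 by blast
  moreover have "0 < 2 / \<epsilon>"
    using \<open>0 < \<epsilon>\<close> by simp
  ultimately have "0 < real m"
    by linarith
  then have m: "m \<ge> 1" and fine: "2 / real m \<le> \<epsilon>"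
    using m_big \<open>0 < \<epsilon>\<close> by (auto simp: field_simps)
  define W where "W = {torus_cell n m j k | j k. j \<le> 2 * n}"
  have "\<Union>W = torus_pow n"
  proof
    show "\<Union>W \<subseteq> torus_pow n"
      unfolding W_def torus_cell_def by blast
    show "torus_pow n \<subseteq> \<Union>W"
      unfolding W_def using torus_cells_cover[of _ n m] by blast
  qed
  moreover have "\<forall>V\<in>W. openin (torus_pow_topology n) V"
    unfolding W_def using openin_torus_cell[OF n] by blast
  moreover have "\<forall>V\<in>W. \<forall>x\<in>V. \<forall>y\<in>V. linf_dist n x y \<le> \<epsilon>"
    unfolding W_def using torus_cell_linf_dist_le[OF n m] fine by fastforce
  moreover have "cover_order W \<le> enat (2 * n)"
    unfolding W_def by (rule cover_order_le_layers) (rule torus_cells_disjoint)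
  ultimately show ?thesis
    by blast
qed

theorem lemma5p1:
  fixes n :: nat and \<epsilon> :: real
  assumes "n \<ge> 1" and "0 < \<epsilon>" and "\<epsilon> < 1/2"
  shows "widim \<epsilon> (torus_pow n) (linf_dist n) = enat (2 * n)"
proof -
  let ?admissible = "{U. (\<forall>V\<in>U. openin (torus_pow_topology n) V) \<and> \<Union>U = torus_pow n
                         \<and> (\<forall>V\<in>U. \<forall>x\<in>V. \<forall>y\<in>V. linf_dist n x y \<le> \<epsilon>)}"
  from torus_pow_cover_order_le[OF assms(1,2)]
  obtain W where "W \<in> ?admissible" and "cover_order W \<le> enat (2 * n)"
    by auto
  moreover have "enat (2 * n) \<le> cover_order U" if "U \<in> ?admissible" for U
    using that by (intro torus_pow_cover_order_ge[OF assms(1,3)]) auto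
  ultimately show ?thesis
    unfolding widim_def by (meson INF_greatest INF_lower2 antisym)
qed

end
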